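(* For every integer $n\ge1$ the following hold in the $q$-shuffle algebra $\mathbb V$ (polynomials are evaluated using $\star$; the elements $\tilde G_i$ mutually commute, as do the $C_i$). (i) $C_n$ is a homogeneous polynomial in $\tilde G_1,\ldots,\tilde G_n$ of total degree $n$, where each $\tilde G_i$ is given degree $i$. In this polynomial the coefficient of $\tilde G_n$ is $(-1)^{n+1}(q^n+q^{-n})$. (ii) $\tilde G_n$ is a homogeneous polynomial in $C_1,\ldots,C_n$ of total degree $n$, where each $C_i$ is given degree $i$. In this polynomial the coefficient of $C_n$ is $(-1)^{n+1}(q^n+q^{-n})^{-1}$.
   Context: Let $\mathbb F$ be a field and let $q\in\mathbb F$ be nonzero and not a root of unity. Let $[m]_q=(q^m-q^{-m})/(q-q^{-1})$. Let $\mathbb V$ be the free associative $\mathbb F$-algebra on noncommuting $x,y$, with basis the words (including $1$). Juxtaposition denotes concatenation. Set $\langle x,x\rangle=\langle y,y\rangle=2$ and $\langle x,y\rangle=\langle y,x\rangle=-2$. The $q$-shuffle product $\star$ is the bilinear product determined as follows: - $1\star v=v\star 1=v$; - for nontrivial words $u=u_1\cdots u_r$ and $v=v_1\cdots v_s$, $$u\star v=u_1((u_2\cdots u_r)\star v)+v_1(u\star(v_2\cdots v_s))q^{\langle u_1,v_1\rangle+\cdots+\langle u_r,v_1\rangle}.$$ This makes $\mathbb V$ an associative algebra, the $q$-shuffle algebra. For $k\in\mathbb N$, let $\tilde G_k=xyxy\cdots xy$ be the word of length $2k$, with $\tilde G_0=1$. Let $\overline x=1$ and $\overline y=-1$. A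 word $v_1\cdots v_m$ is Catalan if $\overline v_1+\cdots+\overline v_i\ge0$ for $1\le i\le m-1$ and $\overline v_1+\cdots+\overline v_m=0$. For $n\in\mathbb N$, $$C_n=\sum v_1\cdots v_{2n}\,[1]_q[1+\overline v_1]_q\cdots[1+\overline v_1+\cdots+\overline v_{2n}]_q,$$ where the sum is over Catalan words of length $2n$. *)

theory Defs
  imports Main "HOL-Library.Multiset"
begin

text \<open>An element of the free algebra V
  is represented by its coefficient function on words (elements of V are the
  finitely supported ones; all elements considered here are finitely supported).\<close>

datatype letter = X | Y

type_synonym 'a vec = "letter list \<Rightarrow> 'a"

fun bil :: "letter \<Rightarrow> letter \<Rightarrow> int" where
  "bil X X = 2" | "bil Y Y = 2" | "bil X Y = -2" | "bil Y X = -2"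

definition basis :: "letter list \<Rightarrow> 'a::field vec" where
  "basis u = (\<lambda>w. if w = u then 1 else 0)"

definition prepend :: "letter \<Rightarrow> 'a::field vec \<Rightarrow> 'a vec" where
  "prepend a f = (\<lambda>w. case w of [] \<Rightarrow> 0 | b # w' \<Rightarrow> if b = a then f w' else 0)"

fun wstar :: "'a::field \<Rightarrow> letter list \<Rightarrow> letter list \<Rightarrow> 'a vec" where
  "wstar q [] v = basis v"
| "wstar q (a # u) [] = basis (a # u)"
| "wstar q (a # u) (b # v) =
     (\<lambda>w. prepend a (wstar q u (b # v)) w
        + q powi (sum_list (map (\<lambda>c. bil c b) (a # u))) * prepend b (wstar q (a # u) v) w)"

definition supp :: "'a::zero vec \<Rightarrow> letter list set" where
  "supp f = {w. f w \<noteq> 0}"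

definition qstar :: "'a::field \<Rightarrow> 'a vec \<Rightarrow> 'a vec \<Rightarrow> 'a vec" where
  "qstar q f g = (\<lambda>w. \<Sum>u\<in>supp f. \<Sum>v\<in>supp g. f u * g v * wstar q u v w)"

definition qstar_list :: "'a::field \<Rightarrow> 'a vec list \<Rightarrow> 'a vec" where
  "qstar_list q fs = foldr (qstar q) fs (basis [])"

definition Gt :: "nat \<Rightarrow> 'a::field vec" where
  "Gt k = basis (concat (replicate k [X, Y]))"

definition qint :: "'a::field \<Rightarrow> int \<Rightarrow> 'a" where
  "qint q m = (q powi m - q powi (- m)) / (q - inverse q)"

fun bar :: "letter \<Rightarrow> int" where
  "bar X = 1" | "bar Y = -1"

definition psum :: "letter list \<Rightarrow> nat \<Rightarrow> int" where
  "psum w i = sum_list (map bar (take i w))"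

definition catalan :: "letter list \<Rightarrow> bool" where
  "catalan w \<longleftrightarrow> (\<forall>i. 1 \<le> i \<and> i \<le> length w - 1 \<longrightarrow> psum w i \<ge> 0) \<and> psum w (length w) = 0"

definition Cn :: "'a::field \<Rightarrow> nat \<Rightarrow> 'a vec" where
  "Cn q n = (\<lambda>w. if catalan w \<and> length w = 2 * n
      then qint q 1 * (\<Prod>i = 1..2 * n. qint q (1 + psum w i)) else 0)"

definition partitions :: "nat \<Rightarrow> nat multiset set" where
  "partitions n = {p. 0 \<notin># p \<and> sum_mset p = n}"

definition monomial :: "'a::field \<Rightarrow> (nat \<Rightarrow> 'a vec) \<Rightarrow> nat multiset \<Rightarrow> 'a vec" where
  "monomial q F p = qstar_list q (map F (sorted_list_of_multiset p))"

text \<open>f is a homogeneous polynomial of weighted degree n in F_1,...,F_n (F_i of degree i),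
  with coefficient function c on monomials (indexed by partitions of n).\<close>
definition hom_poly_with :: "'a::field \<Rightarrow> (nat \<Rightarrow> 'a vec) \<Rightarrow> nat \<Rightarrow> (nat multiset \<Rightarrow> 'a) \<Rightarrow> 'a vec \<Rightarrow> bool" where
  "hom_poly_with q F n c f \<longleftrightarrow>
     f = (\<lambda>w. \<Sum>p\<in>partitions n. c p * monomial q F p w)"

end

theory Submission
  imports Defs
begin

text \<open>The recursion defining \<open>\<star>\<close> extends it to arbitrary formal series in \<open>x, y\<close>, where it
  stays associative. With \<open>C(t) = \<Sum> C\<^sub>n t\<^sup>n\<close> and \<open>G(t) = \<Sum> G\<^sub>k t\<^sup>k\<close> one has
  \<open>C(1) \<star> G(-q) \<star> G(-q\<^sup>-\<^sup>1) = 1\<close>: the products of the series of lattice paths with the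
  \<open>G\<close>-series satisfy a closed system of first-letter recursions, which is solved explicitly.
  As \<open>C\<^sub>n\<close> and \<open>G\<^sub>k\<close> are homogeneous of length \<open>2n\<close> and \<open>2k\<close>, the part of length \<open>2n\<close> reads
  \<open>C\<^sub>n + ((-q)\<^sup>n + (-q\<^sup>-\<^sup>1)\<^sup>n) G\<^sub>n + (\<Sum> of C\<^sub>i \<star> G\<^sub>j \<star> G\<^sub>k with i, j, k < n) = 0\<close>.
  Since the \<open>G\<^sub>k\<close> commute, strong induction on \<open>n\<close> writes \<open>C\<^sub>n\<close> as a polynomial in the \<open>G\<^sub>k\<close>;
  then the \<open>C\<^sub>n\<close> commute as well, and because \<open>q\<^sup>n + q\<^sup>-\<^sup>n \<noteq> 0\<close> for \<open>q\<close> not a root of unity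
  the same relation can be solved for \<open>G\<^sub>n\<close>.\<close>

section \<open>The q-shuffle product on formal series\<close>

definition lder :: "letter \<Rightarrow> 'a vec \<Rightarrow> 'a vec" where
  "lder a f = (\<lambda>w. f (a # w))"

definition height :: "letter list \<Rightarrow> int" where
  "height w = sum_list (map bar w)"

text \<open>\<open>twist q a\<close> multiplies the coefficient of a word \<open>w\<close> by \<open>q\<close> to the power
  \<open>\<langle>a,w\<^sub>1\<rangle> + \<dots> + \<langle>a,w\<^sub>m\<rangle>\<close>.\<close>
definition twist :: "'a::field \<Rightarrow> letter \<Rightarrow> 'a vec \<Rightarrow> 'a vec" where
  "twist q a f = (\<lambda>w. q powi (2 * bar a * height w) * f w)"

text \<open>Reading off the first letter of the result, the recursion defining \<open>\<star>\<close>
  becomes \<open>\<partial>\<^sub>a(f \<star> g) = \<partial>\<^sub>a f \<star> g + twist\<^sub>a f \<star> \<partial>\<^sub>a g\<close>. Taken as a definition,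
  this extends \<open>\<star>\<close> to arbitrary coefficient functions, where it is manifestly bilinear.\<close>
fun qsh :: "'a::field \<Rightarrow> 'a vec \<Rightarrow> 'a vec \<Rightarrow> letter list \<Rightarrow> 'a" where
  "qsh q f g [] = f [] * g []"
| "qsh q f g (a # w) = qsh q (lder a f) g w + qsh q (twist q a f) (lder a g) w"

declare qsh.simps [simp del]

lemma height_simps [simp]: "height [] = 0" "height (a # w) = bar a + height w"
  by (simp_all add: height_def)

lemma lder_zero [simp]: "lder a (\<lambda>_. 0) = (\<lambda>_. 0)"
  by (simp add: lder_def)

lemma twist_zero [simp]: "twist q a (\<lambda>_. 0) = (\<lambda>_. 0)"
  by (simp add: twist_def)

lemma qsh_zero_left [simp]: "qsh q (\<lambda>_. 0) g w = 0"
  by (induction w arbitrary: g) (simp_all add: qsh.simps)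

lemma qsh_zero_right [simp]: "qsh q f (\<lambda>_. 0) w = 0"
  by (induction w arbitrary: f) (simp_all add: qsh.simps)

lemma qsh_sum_left: "qsh q (\<lambda>w. \<Sum>i\<in>I. f i w) g w = (\<Sum>i\<in>I. qsh q (f i) g w)"
proof (induction w arbitrary: f g)
  case Nil
  then show ?case by (simp add: qsh.simps sum_distrib_right)
next
  case (Cons a w)
  have "lder a (\<lambda>w. \<Sum>i\<in>I. f i w) = (\<lambda>w. \<Sum>i\<in>I. lder a (f i) w)"
    "twist q a (\<lambda>w. \<Sum>i\<in>I. f i w) = (\<lambda>w. \<Sum>i\<in>I. twist q a (f i) w)"
    by (simp_all add: lder_def twist_def sum_distrib_left)
  then show ?case by (simp add: qsh.simps Cons sum.distrib)
qed

lemma qsh_sum_right: "qsh q f (\<lambda>w. \<Sum>i\<in>I. g i w) w = (\<Sum>i\<in>I. qsh q f (g i) w)"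
proof (induction w arbitrary: f g)
  case Nil
  then show ?case by (simp add: qsh.simps sum_distrib_left)
next
  case (Cons a w)
  have "lder a (\<lambda>w. \<Sum>i\<in>I. g i w) = (\<lambda>w. \<Sum>i\<in>I. lder a (g i) w)"
    by (simp add: lder_def)
  then show ?case by (simp add: qsh.simps Cons sum.distrib)
qed

lemma qsh_add_left: "qsh q (\<lambda>w. f1 w + f2 w) g w = qsh q f1 g w + qsh q f2 g w"
  using qsh_sum_left[of q "\<lambda>i. if i then f1 else f2" UNIV g w]
  by (simp add: UNIV_bool add.commute)

lemma qsh_add_right: "qsh q f (\<lambda>w. g1 w + g2 w) w = qsh q f g1 w + qsh q f g2 w"
  using qsh_sum_right[of q f "\<lambda>i. if i then g1 else g2" UNIV w]
  by (simp add: UNIV_bool add.commute)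

lemma qsh_scale_left: "qsh q (\<lambda>w. c * f w) g w = c * qsh q f g w"
proof (induction w arbitrary: f g)
  case Nil
  then show ?case by (simp add: qsh.simps)
next
  case (Cons a w)
  have "lder a (\<lambda>w. c * f w) = (\<lambda>w. c * lder a f w)"
    "twist q a (\<lambda>w. c * f w) = (\<lambda>w. c * twist q a f w)"
    by (simp_all add: lder_def twist_def algebra_simps)
  then show ?case by (simp add: qsh.simps Cons algebra_simps)
qed

lemma qsh_scale_right: "qsh q f (\<lambda>w. c * g w) w = c * qsh q f g w"
proof (induction w arbitrary: f g)
  case Nil
  then show ?case by (simp add: qsh.simps)
next
  case (Cons a w)
  have "lder a (\<lambda>w. c * g w) = (\<lambda>w. c * lder a g w)"
    by (simp add: lder_def)
  then show ?case by (simp add: qsh.simps Cons algebra_simps)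
qed

lemma qsh_neg_left: "qsh q (\<lambda>w. - f w) g w = - qsh q f g w"
  using qsh_scale_left[of q "-1" f g w] by simp

lemma qsh_neg_right: "qsh q f (\<lambda>w. - g w) w = - qsh q f g w"
  using qsh_scale_right[of q f "-1" g w] by simp

lemma qsh_sum_sum:
  "qsh q (\<lambda>w. \<Sum>i\<in>I. c i * f i w) (\<lambda>w. \<Sum>j\<in>J. d j * g j w) w
   = (\<Sum>i\<in>I. \<Sum>j\<in>J. c i * d j * qsh q (f i) (g j) w)"
  by (simp add: qsh_sum_left qsh_sum_right qsh_scale_left qsh_scale_right
      sum_distrib_left mult.assoc)

lemma lder_basis:
  "lder a (basis u) = (if u \<noteq> [] \<and> hd u = a then basis (tl u) else (\<lambda>_. 0))"
  by (cases u) (auto simp: lder_def basis_def fun_eq_iff)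

lemma twist_basis: "twist q a (basis u) = (\<lambda>w. q powi (2 * bar a * height u) * basis u w)"
  by (auto simp: twist_def basis_def fun_eq_iff)

lemma qsh_one_left [simp]: "qsh q (basis []) g = g"
proof
  fix w show "qsh q (basis []) g w = g w"
    by (induction w arbitrary: g) (simp_all add: qsh.simps lder_basis twist_basis, simp_all add: basis_def lder_def)
qed

lemma qsh_one_right [simp]: "qsh q f (basis []) = f"
proof
  fix w show "qsh q f (basis []) w = f w"
    by (induction w arbitrary: f) (simp_all add: qsh.simps lder_basis, simp_all add: basis_def lder_def)
qed

lemma sum_bil: "sum_list (map (\<lambda>c. bil c b) u) = 2 * bar b * height u"
proof -
  have "bil c b = 2 * bar c * bar b" for c
    by (cases c; cases b) simp_all
  then show ?thesis by (induction u) (simp_all add: algebra_simps)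
qed

lemma qsh_basis: "qsh q (basis u) (basis v) = wstar q u v"
proof
  fix w show "qsh q (basis u) (basis v) w = wstar q u v w"
  proof (induction w arbitrary: u v)
    case Nil
    show ?case
      by (cases u; cases v) (simp_all add: qsh.simps basis_def prepend_def)
  next
    case (Cons a w)
    show ?case
    proof (cases u)
      case Nil
      then show ?thesis by simp
    next
      case u: (Cons b u')
      show ?thesis
      proof (cases v)
        case Nil
        then show ?thesis using u
          by (simp add: qsh.simps lder_basis twist_basis qsh_scale_left; simp add: basis_def)
      next
        case (Cons c v')
        then show ?thesis using u
          by (auto simp: qsh.simps lder_basis twist_basis qsh_scale_left Cons.IH prepend_def sum_bil
              simp del: sum_list.Cons list.map)
      qed
    qed
  qed
qed

definition homog :: "nat \<Rightarrow> 'a::zero vec \<Rightarrow> bool" where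
  "homog m f \<longleftrightarrow> (\<forall>w. f w \<noteq> 0 \<longrightarrow> length w = m)"

lemma homog_basis: "homog (length u) (basis u)"
  by (simp add: homog_def basis_def)

lemma homog_qsh:
  assumes "homog a f" "homog b g"
  shows "homog (a + b) (qsh q f g)"
  unfolding homog_def
proof (intro allI impI)
  fix w show "qsh q f g w \<noteq> 0 \<Longrightarrow> length w = a + b"
    using assms
  proof (induction w arbitrary: f g a b)
    case Nil
    then show ?case by (auto simp: qsh.simps homog_def)
  next
    case (Cons c w)
    have "qsh q (lder c f) g w \<noteq> 0 \<or> qsh q (twist q c f) (lder c g) w \<noteq> 0"
      using Cons.prems(1) by (auto simp: qsh.simps)
    then show ?case
    proof
      assume nz: "qsh q (lder c f) g w \<noteq> 0"
      then obtain u where "lder c f u \<noteq> 0" by (metis ext qsh_zero_left)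
      then have "a \<ge> 1" "homog (a - 1) (lder c f)"
        using Cons.prems(2) by (auto simp: homog_def lder_def)
      with Cons.IH[OF nz _ Cons.prems(3)] show ?thesis by simp
    next
      assume nz: "qsh q (twist q c f) (lder c g) w \<noteq> 0"
      then obtain u where "lder c g u \<noteq> 0" by (metis ext qsh_zero_right)
      then have "b \<ge> 1" "homog (b - 1) (lder c g)"
        using Cons.prems(3) by (auto simp: homog_def lder_def)
      moreover have "homog a (twist q c f)"
        using Cons.prems(2) by (auto simp: homog_def twist_def)
      ultimately show ?thesis using Cons.IH[OF nz] by fastforce
    qed
  qed
qed

definition fin_supp :: "'a::zero vec \<Rightarrow> bool" where
  "fin_supp f \<longleftrightarrow> finite (supp f)"

lemma fin_supp_basis: "fin_supp (basis u)"
  by (simp add: fin_supp_def supp_def basis_def)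

lemma finite_words_length: "finite {w :: letter list. length w = n}"
proof -
  have "(UNIV :: letter set) = {X, Y}"
    using letter.exhaust by auto
  then have "finite (UNIV :: letter set)"
    by (metis finite.emptyI finite_insert)
  then have "finite {xs. set xs \<subseteq> (UNIV :: letter set) \<and> length xs = n}"
    by (intro finite_lists_length_eq)
  then show ?thesis by simp
qed

lemma fin_supp_homog: "homog m f \<Longrightarrow> fin_supp f"
  unfolding fin_supp_def supp_def homog_def
  by (rule finite_subset[OF _ finite_words_length]) auto

lemma fin_supp_expand: "fin_supp f \<Longrightarrow> f = (\<lambda>w. \<Sum>u\<in>supp f. f u * basis u w)"
proof
  fix w assume "fin_supp f"
  then have "(\<Sum>u\<in>supp f. f u * basis u w) = (if w \<in> supp f then f w else 0)"
    by (simp add: fin_supp_def basis_def if_distrib[of "\<lambda>x. _ * x"] cong: if_cong)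
  then show "f w = (\<Sum>u\<in>supp f. f u * basis u w)" by (simp add: supp_def)
qed

lemma qstar_eq_qsh:
  assumes "fin_supp f" "fin_supp g"
  shows "qstar q f g = qsh q f g"
proof
  fix w
  have "qsh q f g w = qsh q (\<lambda>x. \<Sum>u\<in>supp f. f u * basis u x) (\<lambda>x. \<Sum>v\<in>supp g. g v * basis v x) w"
    using fin_supp_expand[OF assms(1)] fin_supp_expand[OF assms(2)] by simp
  then show "qstar q f g w = qsh q f g w"
    by (simp add: qstar_def qsh_sum_sum qsh_basis)
qed

lemma fin_supp_qsh:
  assumes "fin_supp f" "fin_supp g"
  shows "fin_supp (qsh q f g)"
proof -
  have "supp (qsh q f g) \<subseteq> (\<Union>u\<in>supp f. \<Union>v\<in>supp g. {w. length w = length u + length v})"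
  proof
    fix w assume "w \<in> supp (qsh q f g)"
    then have "qstar q f g w \<noteq> 0"
      by (simp add: supp_def qstar_eq_qsh[OF assms])
    then obtain u v where "u \<in> supp f" "v \<in> supp g" "wstar q u v w \<noteq> 0"
      unfolding qstar_def by (metis (no_types, lifting) mult_zero_right sum.neutral)
    moreover have "homog (length u + length v) (wstar q u v)"
      using homog_qsh[OF homog_basis homog_basis] by (simp add: qsh_basis)
    ultimately show "w \<in> (\<Union>u\<in>supp f. \<Union>v\<in>supp g. {w. length w = length u + length v})"
      by (auto simp: homog_def)
  qed
  moreover have "finite (\<Union>u\<in>supp f. \<Union>v\<in>supp g. {w :: letter list. length w = length u + length v})"
    using assms finite_words_length by (auto simp: fin_supp_def)
  ultimately show ?thesis by (simp add: fin_supp_def finite_subset)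
qed

lemma lder_twist:
  "q \<noteq> 0 \<Longrightarrow> lder b (twist q a f) = (\<lambda>w. q powi (2 * bar a * bar b) * twist q a (lder b f) w)"
  by (simp add: lder_def twist_def fun_eq_iff distrib_left power_int_add)

lemma twist_twist: "twist q b (twist q a f) = twist q a (twist q b f)"
  by (simp add: twist_def fun_eq_iff)

text \<open>\<open>twist\<^sub>a\<close> is an algebra endomorphism, because \<open>\<langle>a,\<cdot>\<rangle>\<close> is additive on the letters.\<close>
lemma twist_qsh:
  assumes "q \<noteq> 0"
  shows "twist q a (qsh q f g) = qsh q (twist q a f) (twist q a g)"
proof
  fix w
  show "twist q a (qsh q f g) w = qsh q (twist q a f) (twist q a g) w"
  proof (induction w arbitrary: f g)
    case Nil
    then show ?case by (simp add: qsh.simps twist_def)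
  next
    case (Cons b w)
    have IH: "qsh q (twist q a f') (twist q a g') w = q powi (2 * bar a * height w) * qsh q f' g' w"
      for f' g' using Cons[of f' g'] by (simp add: twist_def)
    have "qsh q (twist q a f) (twist q a g) (b # w)
        = q powi (2 * bar a * bar b) * qsh q (twist q a (lder b f)) (twist q a g) w
          + q powi (2 * bar a * bar b) * qsh q (twist q a (twist q b f)) (twist q a (lder b g)) w"
      using assms by (simp add: qsh.simps lder_twist twist_twist qsh_scale_left qsh_scale_right)
    also have "\<dots> = q powi (2 * bar a * bar b) * q powi (2 * bar a * height w) *
        (qsh q (lder b f) g w + qsh q (twist q b f) (lder b g) w)"
      by (simp add: IH algebra_simps)
    also have "\<dots> = twist q a (qsh q f g) (b # w)"
      using assms by (simp add: twist_def qsh.simps distrib_left power_int_add)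
    finally show ?case ..
  qed
qed

lemma lder_qsh: "lder a (qsh q f g) = (\<lambda>w. qsh q (lder a f) g w + qsh q (twist q a f) (lder a g) w)"
  by (simp add: lder_def qsh.simps)

lemma qsh_assoc:
  assumes "q \<noteq> 0"
  shows "qsh q (qsh q f g) h = qsh q f (qsh q g h)"
proof
  fix w
  show "qsh q (qsh q f g) h w = qsh q f (qsh q g h) w"
  proof (induction w arbitrary: f g h)
    case Nil
    then show ?case by (simp add: qsh.simps)
  next
    case (Cons a w)
    have "qsh q (qsh q f g) h (a # w)
        = qsh q (qsh q (lder a f) g) h w + qsh q (qsh q (twist q a f) (lder a g)) h w
          + qsh q (qsh q (twist q a f) (twist q a g)) (lder a h) w"
      using assms by (simp add: qsh.simps lder_qsh qsh_add_left twist_qsh)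
    also have "\<dots> = qsh q (lder a f) (qsh q g h) w + qsh q (twist q a f) (qsh q (lder a g) h) w
        + qsh q (twist q a f) (qsh q (twist q a g) (lder a h)) w"
      by (simp add: Cons)
    also have "\<dots> = qsh q f (qsh q g h) (a # w)"
      by (simp add: qsh.simps lder_qsh qsh_add_right)
    finally show ?case .
  qed
qed

lemma qsh_cong_short:
  assumes "\<And>u. length u \<le> length w \<Longrightarrow> f u = f' u"
    and "\<And>u. length u \<le> length w \<Longrightarrow> g u = g' u"
  shows "qsh q f g w = qsh q f' g' w"
  using assms
proof (induction w arbitrary: f f' g g')
  case Nil
  then show ?case by (simp add: qsh.simps)
next
  case (Cons a w)
  have "qsh q (lder a f) g w = qsh q (lder a f') g' w"
    "qsh q (twist q a f) (lder a g) w = qsh q (twist q a f') (lder a g') w"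
    by (rule Cons.IH; simp add: Cons.prems lder_def twist_def)+
  then show ?case by (simp add: qsh.simps)
qed

section \<open>The words \<open>G\<^sub>k\<close> commute\<close>

text \<open>Integer-indexed versions of \<open>G\<^sub>k = (xy)\<^sup>k\<close> and of \<open>W\<^sub>k = \<partial>\<^sub>x G\<^sub>k = y(xy)\<^sup>k\<^sup>-\<^sup>1\<close>,
  vanishing for out-of-range indices so that the derivative rules hold uniformly.\<close>
definition Gint :: "int \<Rightarrow> 'a::field vec" where
  "Gint j = (if j < 0 then (\<lambda>_. 0) else Gt (nat j))"

definition Wint :: "int \<Rightarrow> 'a::field vec" where
  "Wint j = (if j < 1 then (\<lambda>_. 0) else basis (Y # concat (replicate (nat (j - 1)) [X, Y])))"

lemma height_xy_power [simp]: "height (concat (replicate k [X, Y])) = 0"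
  by (induction k) simp_all

lemma lder_Gint_X [simp]: "lder X (Gint j) = Wint j"
proof (cases "j \<ge> 1")
  case True
  then have "nat j = Suc (nat (j - 1))" by simp
  with True show ?thesis by (simp add: Gint_def Wint_def Gt_def lder_basis)
qed (cases "j = 0"; auto simp: Gint_def Wint_def Gt_def lder_basis)

lemma lder_Gint_Y [simp]: "lder Y (Gint j) = (\<lambda>_. 0)"
proof (cases "j \<ge> 1")
  case True
  then have "nat j = Suc (nat (j - 1))" by simp
  with True show ?thesis by (simp add: Gint_def Gt_def lder_basis)
qed (cases "j = 0"; auto simp: Gint_def Gt_def lder_basis)

lemma lder_Wint_X [simp]: "lder X (Wint j) = (\<lambda>_. 0)"
  by (auto simp: Wint_def lder_basis)

lemma lder_Wint_Y [simp]: "lder Y (Wint j) = Gint (j - 1)"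
  by (auto simp: Wint_def Gint_def Gt_def lder_basis)

lemma twist_Gint [simp]: "twist q a (Gint j) = Gint j"
  by (auto simp: twist_def Gint_def Gt_def basis_def fun_eq_iff)

lemma twist_Wint: "twist q a (Wint j) = (\<lambda>w. q powi (- 2 * bar a) * Wint j w)"
  by (auto simp: twist_def Wint_def basis_def fun_eq_iff)

lemma Gint_Nil: "Gint j [] = (if j = 0 then 1 else 0)"
  by (auto simp: Gint_def Gt_def basis_def)

lemma Wint_Nil [simp]: "Wint j [] = 0"
  by (auto simp: Wint_def basis_def)

context
  fixes q :: "'a::field"
  assumes q_nonzero: "q \<noteq> 0"
begin

text \<open>Under \<open>\<partial>\<^sub>x\<close> and \<open>\<partial>\<^sub>y\<close> the following four families of products map into each
  other, and each rule is symmetric in \<open>j, k\<close>.\<close>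
definition GG :: "int \<Rightarrow> int \<Rightarrow> 'a vec" where
  "GG j k = qsh q (Gint j) (Gint k)"

definition WG :: "int \<Rightarrow> int \<Rightarrow> 'a vec" where
  "WG j k = (\<lambda>w. qsh q (Wint j) (Gint k) w + qsh q (Gint j) (Wint k) w)"

definition GW :: "int \<Rightarrow> int \<Rightarrow> 'a vec" where
  "GW j k = (\<lambda>w. qsh q (Gint (j - 1)) (Wint k) w + q powi 2 * qsh q (Wint j) (Gint (k - 1)) w)"

definition WW :: "int \<Rightarrow> int \<Rightarrow> 'a vec" where
  "WW j k = qsh q (Wint j) (Wint k)"

lemma GG_Cons: "GG j k (X # w) = WG j k w" "GG j k (Y # w) = 0"
  by (simp_all add: GG_def WG_def qsh.simps)

lemma WG_Cons:
  "WG j k (X # w) = (q powi (-2) + 1) * WW j k w"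
  "WG j k (Y # w) = GG (j - 1) k w + GG j (k - 1) w"
  by (simp_all add: WG_def WW_def GG_def qsh.simps twist_Wint qsh_scale_left)
     (simp_all add: algebra_simps)

lemma GW_Cons:
  "GW j k (X # w) = WW (j - 1) k w + WW j (k - 1) w"
  "GW j k (Y # w) = (1 + q powi 2) * GG (j - 1) (k - 1) w"
  using q_nonzero
  by (simp_all add: GW_def WW_def GG_def qsh.simps twist_Wint qsh_scale_left)
     (simp_all add: algebra_simps power_int_minus)

lemma WW_Cons: "WW j k (X # w) = 0" "WW j k (Y # w) = GW j k w"
  by (simp_all add: WW_def GW_def qsh.simps twist_Wint qsh_scale_left)

lemma products_symmetric:
  "GG j k w = GG k j w \<and> WG j k w = WG k j w \<and> GW j k w = GW k j w \<and> WW j k w = WW k j w"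
proof (induction w arbitrary: j k)
  case Nil
  show ?case by (simp add: GG_def WG_def GW_def WW_def qsh.simps Gint_Nil)
next
  case (Cons a w)
  then show ?case
    by (cases a) (simp_all add: GG_Cons WG_Cons GW_Cons WW_Cons add.commute)
qed

lemma Gt_commute: "qsh q (Gt i) (Gt j) = qsh q (Gt j) (Gt i)"
  using products_symmetric[of "int i" "int j"] by (auto simp: GG_def Gint_def)

end

section \<open>The generating-function identity\<close>

text \<open>\<open>path_series q h\<close> is supported on lattice paths from height \<open>h\<close> down to \<open>0\<close>;
  for \<open>h = 0\<close> it is \<open>\<Sum>\<^sub>n C\<^sub>n\<close> (lemma \<open>Cn_eq_path_series\<close>).\<close>
fun path_weight :: "'a::field \<Rightarrow> int \<Rightarrow> letter list \<Rightarrow> 'a" where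
  "path_weight q h [] = 1"
| "path_weight q h (c # w) = qint q (1 + h + bar c) * path_weight q (h + bar c) w"

definition path_series :: "'a::field \<Rightarrow> int \<Rightarrow> 'a vec" where
  "path_series q h = (\<lambda>w. if h + height w = 0 then path_weight q h w else 0)"

fun zweight :: "'a::field \<Rightarrow> int \<Rightarrow> letter list \<Rightarrow> 'a" where
  "zweight q r [] = 1"
| "zweight q r (c # w) = q * qint q r * zweight q (r + bar c) w"

definition zseries :: "'a::field \<Rightarrow> int \<Rightarrow> 'a vec" where
  "zseries q r = (\<lambda>w. if r + height w = 0 then zweight q r w else 0)"

text \<open>\<open>gseries \<alpha> = \<Sum>\<^sub>k \<alpha>\<^sup>k G\<^sub>k\<close> and \<open>wseries \<alpha> = \<partial>\<^sub>x (gseries \<alpha>)\<close>.\<close>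
fun gseries :: "'a::field \<Rightarrow> letter list \<Rightarrow> 'a" and wseries :: "'a::field \<Rightarrow> letter list \<Rightarrow> 'a" where
  "gseries \<alpha> [] = 1"
| "gseries \<alpha> (X # w) = wseries \<alpha> w"
| "gseries \<alpha> (Y # w) = 0"
| "wseries \<alpha> [] = 0"
| "wseries \<alpha> (X # w) = 0"
| "wseries \<alpha> (Y # w) = \<alpha> * gseries \<alpha> w"

lemma qint_zero [simp]: "qint q 0 = 0"
  by (simp add: qint_def)

lemma lder_path_series:
  "lder X (path_series q h) = (\<lambda>w. qint q (h + 2) * path_series q (h + 1) w)"
  "lder Y (path_series q h) = (\<lambda>w. qint q h * path_series q (h - 1) w)"
  by (auto simp: lder_def path_series_def fun_eq_iff algebra_simps)

lemma twist_path_series: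
  "twist q a (path_series q h) = (\<lambda>w. q powi (- 2 * bar a * h) * path_series q h w)"
proof
  fix w
  show "twist q a (path_series q h) w = q powi (- 2 * bar a * h) * path_series q h w"
  proof (cases "h + height w = 0")
    case True
    then have "height w = - h" by simp
    then show ?thesis by (simp add: twist_def path_series_def)
  qed (simp add: twist_def path_series_def)
qed

lemma zseries_Cons:
  "zseries q r (X # w) = q * qint q r * zseries q (r + 1) w"
  "zseries q r (Y # w) = q * qint q r * zseries q (r - 1) w"
  by (auto simp: zseries_def algebra_simps)

lemma zseries_Nil: "zseries q r [] = (if r = 0 then 1 else 0)"
  by (simp add: zseries_def)

lemma zseries_zero: "zseries q 0 = basis []"
  by (auto simp: fun_eq_iff basis_def zseries_def neq_Nil_conv)

lemma lder_gseries [simp]: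
  "lder X (gseries \<alpha>) = wseries \<alpha>" "lder Y (gseries \<alpha>) = (\<lambda>_. 0)"
  by (simp_all add: lder_def fun_eq_iff)

lemma lder_wseries [simp]:
  "lder X (wseries \<alpha>) = (\<lambda>_. 0)" "lder Y (wseries \<alpha>) = (\<lambda>w. \<alpha> * gseries \<alpha> w)"
  by (simp_all add: lder_def fun_eq_iff)

lemma height_gseries_wseries:
  "(gseries \<alpha> w \<noteq> 0 \<longrightarrow> height w = 0) \<and> (wseries \<alpha> w \<noteq> 0 \<longrightarrow> height w = -1)"
proof (induction w)
  case (Cons c w)
  then show ?case by (cases c) auto
qed simp

lemma twist_gseries [simp]: "twist q a (gseries \<alpha>) = gseries \<alpha>"
  using height_gseries_wseries by (fastforce simp: twist_def)

lemma twist_wseries: "twist q a (wseries \<alpha>) = (\<lambda>w. q powi (- 2 * bar a) * wseries \<alpha> w)"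
  using height_gseries_wseries by (fastforce simp: twist_def)

context
  fixes q :: "'a::field"
  assumes q_nonzero: "q \<noteq> 0" and q_square: "q * q \<noteq> 1"
begin

lemma q_minus_inverse_nonzero: "q - inverse q \<noteq> 0"
proof
  assume "q - inverse q = 0"
  then have "q * q = q * inverse q" by simp
  with q_nonzero q_square show False by simp
qed

lemma qint_one: "qint q 1 = 1"
  using q_minus_inverse_nonzero by (simp add: qint_def)

lemma qint_two: "qint q 2 = q + inverse q"
  using q_minus_inverse_nonzero
  by (simp add: qint_def power_int_minus power2_eq_square field_simps)

lemma qint_succ_left: "qint q (h + 1) = q * qint q h + q powi (- h)"
proof -
  have "q powi (h + 1) - inverse (q powi (h + 1))
      = q * (q powi h - inverse (q powi h)) + inverse (q powi h) * (q - inverse q)"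
    using q_nonzero by (simp add: power_int_add field_simps)
  then have "qint q (h + 1)
      = (q * (q powi h - inverse (q powi h)) + inverse (q powi h) * (q - inverse q)) / (q - inverse q)"
    unfolding qint_def power_int_minus by simp
  then show ?thesis
    using q_minus_inverse_nonzero by (simp add: qint_def power_int_minus add_divide_distrib)
qed

lemma qint_succ_right: "qint q (h + 1) = inverse q * qint q h + q powi h"
proof -
  have "q powi (h + 1) - inverse (q powi (h + 1))
      = inverse q * (q powi h - inverse (q powi h)) + q powi h * (q - inverse q)"
    using q_nonzero by (simp add: power_int_add field_simps)
  then have "qint q (h + 1)
      = (inverse q * (q powi h - inverse (q powi h)) + q powi h * (q - inverse q)) / (q - inverse q)"
    unfolding qint_def power_int_minus by simp
  then show ?thesis
    using q_minus_inverse_nonzero by (simp add: qint_def power_int_minus add_divide_distrib)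
qed

lemma powi_add: "q powi (a + b) = q powi a * q powi b"
  using q_nonzero by (simp add: power_int_add)

lemma powi_diff: "q powi (a - b) = q powi a * inverse (q powi b)"
  using q_nonzero by (simp add: power_int_diff field_simps)

lemma powi_double: "q powi (2 * a) = q powi a * q powi a"
  by (metis mult_2 powi_add)

lemma powi_small: "q powi 0 = 1" "q powi 1 = q" "q powi 2 = q * q"
  by (simp_all add: power2_eq_square)

text \<open>Identities between q-integers are checked after replacing \<open>[m]\<close> by
  \<open>(q\<^sup>m - q\<^sup>-\<^sup>m) c\<close> with \<open>c\<close> opaque, which keeps \<open>field_simps\<close> from creating
  denominators it cannot prove nonzero.\<close>
lemma qint_powi: obtains c where "\<And>m. qint q m = (q powi m - inverse (q powi m)) * c"
  by (rule that[of "inverse (q - inverse q)"]) (simp add: qint_def power_int_minus divide_inverse)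

lemmas powi_expand = power_int_minus powi_diff powi_add powi_double powi_small

definition E0 :: "'a vec" where
  "E0 = qsh q (gseries (- q)) (gseries (- inverse q))"

definition E1 :: "'a vec" where
  "E1 = (\<lambda>w. qsh q (wseries (- q)) (gseries (- inverse q)) w
     + qsh q (gseries (- q)) (wseries (- inverse q)) w)"

definition E2 :: "'a vec" where
  "E2 = qsh q (wseries (- q)) (wseries (- inverse q))"

lemma lder_E0: "lder X E0 = E1" "lder Y E0 = (\<lambda>_. 0)"
  by (simp_all add: E0_def E1_def lder_qsh)

lemma lder_E1:
  "lder X E1 = (\<lambda>w. (inverse (q * q) + 1) * E2 w)"
  "lder Y E1 = (\<lambda>w. (- q - inverse q) * E0 w)"
  by (simp_all add: lder_def E0_def E1_def E2_def qsh.simps twist_wseries qsh_scale_left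
      qsh_scale_right qsh_neg_left qsh_neg_right power_int_minus fun_eq_iff power2_eq_square)
     (simp_all add: algebra_simps)

lemma lder_E2: "lder X E2 = (\<lambda>_. 0)" "lder Y E2 = (\<lambda>w. - q * E1 w)"
  using q_nonzero
  by (simp_all add: lder_def E1_def E2_def qsh.simps twist_wseries qsh_scale_left
      qsh_scale_right qsh_neg_left qsh_neg_right fun_eq_iff power2_eq_square)
     (simp_all add: algebra_simps)

definition prod0 :: "int \<Rightarrow> 'a vec" where "prod0 h = qsh q (path_series q h) E0"
definition prod1 :: "int \<Rightarrow> 'a vec" where "prod1 h = qsh q (path_series q h) E1"
definition prod2 :: "int \<Rightarrow> 'a vec" where "prod2 h = qsh q (path_series q h) E2"

lemma prod_Cons:
  "prod0 h (X # w) = qint q (h + 2) * prod0 (h + 1) w + q powi (- (2 * h)) * prod1 h w"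
  "prod0 h (Y # w) = qint q h * prod0 (h - 1) w"
  "prod1 h (X # w) = qint q (h + 2) * prod1 (h + 1) w
     + q powi (- (2 * h)) * (inverse (q * q) + 1) * prod2 h w"
  "prod1 h (Y # w) = qint q h * prod1 (h - 1) w + q powi (2 * h) * (- q - inverse q) * prod0 h w"
  "prod2 h (X # w) = qint q (h + 2) * prod2 (h + 1) w"
  "prod2 h (Y # w) = qint q h * prod2 (h - 1) w + q powi (2 * h) * (- q) * prod1 h w"
  by (simp_all add: prod0_def prod1_def prod2_def qsh.simps lder_path_series twist_path_series
      lder_E0 lder_E1 lder_E2 qsh_scale_left qsh_scale_right qsh_neg_right mult.assoc)

definition closed0 :: "int \<Rightarrow> 'a vec" where
  "closed0 h = (\<lambda>w. q powi (- h) * zseries q h w)"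

definition closed1 :: "int \<Rightarrow> 'a vec" where
  "closed1 h = (\<lambda>w. - qint q 2 * inverse q * zseries q (h + 1) w)"

definition closed2 :: "int \<Rightarrow> 'a vec" where
  "closed2 h = (\<lambda>w. q powi (h - 1) * zseries q (h + 2) w)"

lemma closed0_Cons_X:
  "closed0 h (X # w) = qint q (h + 2) * closed0 (h + 1) w + q powi (- (2 * h)) * closed1 h w"
proof -
  obtain c where c: "\<And>m. qint q m = (q powi m - inverse (q powi m)) * c"
    using qint_powi by metis
  have "closed0 h (X # w) = (q powi (- h) * (q * qint q h)) * zseries q (h + 1) w"
    by (simp add: closed0_def zseries_Cons mult.assoc)
  also have "q powi (- h) * (q * qint q h)
      = qint q (h + 2) * q powi (- (h + 1)) + q powi (- (2 * h)) * (- qint q 2 * inverse q)"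
    using q_nonzero unfolding qint_two c powi_expand by (simp add: field_simps)
  finally show ?thesis
    by (simp add: closed0_def closed1_def algebra_simps)
qed

lemma closed0_Cons_Y: "closed0 h (Y # w) = qint q h * closed0 (h - 1) w"
proof -
  have "q powi (- h) * q = q powi (- (h - 1))"
    using q_nonzero by (simp add: power_int_add power_int_diff power_int_minus field_simps)
  then show ?thesis by (simp add: closed0_def zseries_Cons algebra_simps)
qed

lemma closed1_Cons_X:
  "closed1 h (X # w) = qint q (h + 2) * closed1 (h + 1) w
     + q powi (- (2 * h)) * (inverse (q * q) + 1) * closed2 h w"
proof -
  have succ2: "qint q (h + 2) = q * qint q (h + 1) + q powi (- (h + 1))"
    using qint_succ_left[of "h + 1"] by (simp add: add.assoc)
  have "closed1 h (X # w) = (- qint q 2 * inverse q * (q * qint q (h + 1))) * zseries q (h + 2) w"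
    by (simp add: closed1_def zseries_Cons mult.assoc add.assoc)
  also have "- qint q 2 * inverse q * (q * qint q (h + 1))
      = qint q (h + 2) * (- qint q 2 * inverse q)
        + q powi (- (2 * h)) * (inverse (q * q) + 1) * q powi (h - 1)"
    using q_nonzero unfolding succ2 qint_two powi_expand by (simp add: field_simps)
  finally show ?thesis
    by (simp add: closed1_def closed2_def algebra_simps)
qed

lemma closed1_Cons_Y:
  "closed1 h (Y # w) = qint q h * closed1 (h - 1) w + q powi (2 * h) * (- q - inverse q) * closed0 h w"
proof -
  have "closed1 h (Y # w) = (- qint q 2 * inverse q * (q * qint q (h + 1))) * zseries q h w"
    by (simp add: closed1_def zseries_Cons mult.assoc)
  also have "- qint q 2 * inverse q * (q * qint q (h + 1))
      = qint q h * (- qint q 2 * inverse q) + q powi (2 * h) * (- q - inverse q) * q powi (- h)"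
  proof -
    have "q powi (2 * h) * q powi (- h) = q powi h"
      using q_nonzero by (simp add: powi_double power_int_minus)
    then show ?thesis
      using q_nonzero unfolding qint_succ_right qint_two by (simp add: field_simps)
  qed
  finally show ?thesis
    by (simp add: closed1_def closed0_def algebra_simps)
qed

lemma closed2_Cons_X: "closed2 h (X # w) = qint q (h + 2) * closed2 (h + 1) w"
proof -
  have "q powi (h - 1) * q = q powi h"
    using q_nonzero by (simp add: power_int_diff field_simps)
  then show ?thesis
    by (simp add: closed2_def zseries_Cons algebra_simps)
qed

lemma closed2_Cons_Y:
  "closed2 h (Y # w) = qint q h * closed2 (h - 1) w + q powi (2 * h) * (- q) * closed1 h w"
proof -
  obtain c where c: "\<And>m. qint q m = (q powi m - inverse (q powi m)) * c"
    using qint_powi by metis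
  have "h + 2 - 1 = h + 1" "h - 1 + 2 = h + 1" by simp_all
  then have "closed2 h (Y # w) = (q powi (h - 1) * (q * qint q (h + 2))) * zseries q (h + 1) w"
    "closed2 (h - 1) w = q powi (h - 1 - 1) * zseries q (h + 1) w"
    by (simp_all only: closed2_def zseries_Cons mult.assoc)
  moreover have "q powi (h - 1) * (q * qint q (h + 2))
      = qint q h * q powi (h - 1 - 1) + q powi (2 * h) * (- q) * (- qint q 2 * inverse q)"
    using q_nonzero unfolding qint_two c powi_expand by (simp add: field_simps)
  ultimately show ?thesis
    by (simp add: closed1_def distrib_right mult.assoc)
qed

lemma prod_eq_closed:
  "h \<ge> 0 \<Longrightarrow> prod0 h w = closed0 h w \<and> prod1 h w = closed1 h w \<and> prod2 h w = closed2 h w"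
proof (induction w arbitrary: h)
  case Nil
  then show ?case
    by (simp add: prod0_def prod1_def prod2_def closed0_def closed1_def closed2_def E0_def E1_def
        E2_def qsh.simps path_series_def zseries_Nil)
next
  case (Cons a w)
  have step_down: "qint q h * f (h - 1) w = qint q h * g (h - 1) w"
    if "\<And>h'. h' \<ge> 0 \<Longrightarrow> f h' w = g h' w" for f g :: "int \<Rightarrow> 'a vec"
    using that[of "h - 1"] Cons.prems by (cases "h = 0") simp_all
  show ?case
  proof (cases a)
    case X
    with Cons show ?thesis
      by (simp add: prod_Cons closed0_Cons_X closed1_Cons_X closed2_Cons_X)
  next
    case Y
    have "qint q h * prod0 (h - 1) w = qint q h * closed0 (h - 1) w"
      "qint q h * prod1 (h - 1) w = qint q h * closed1 (h - 1) w"
      "qint q h * prod2 (h - 1) w = qint q h * closed2 (h - 1) w"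
      by (rule step_down; use Cons.IH in blast)+
    with Y Cons show ?thesis
      by (simp add: prod_Cons closed0_Cons_Y closed1_Cons_Y closed2_Cons_Y)
  qed
qed

text \<open>At \<open>h = 0\<close> the closed form is the unit: the factor \<open>[0] = 0\<close> kills every
  nonempty word in \<open>zseries q 0\<close>.\<close>
theorem path_series_qsh_gseries:
  "qsh q (path_series q 0) (qsh q (gseries (- q)) (gseries (- inverse q))) = basis []"
proof
  fix w
  have "prod0 0 w = closed0 0 w"
    using prod_eq_closed by blast
  then show "qsh q (path_series q 0) (qsh q (gseries (- q)) (gseries (- inverse q))) w = basis [] w"
    by (simp add: prod0_def E0_def closed0_def zseries_zero)
qed

end

section \<open>Catalan words and the path series\<close>

lemma psum_Cons: "psum (c # w) (Suc i) = bar c + psum w i"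
  by (simp add: psum_def)

lemma psum_zero [simp]: "psum w 0 = 0"
  by (simp add: psum_def)

lemma psum_length: "psum w (length w) = height w"
  by (simp add: psum_def height_def)

lemma path_weight_eq_prod: "path_weight q h w = (\<Prod>i = 1..length w. qint q (1 + h + psum w i))"
proof (induction w arbitrary: h)
  case (Cons c w)
  have "(\<Prod>i = 1..Suc (length w). qint q (1 + h + psum (c # w) i))
      = qint q (1 + h + bar c) * (\<Prod>i = 1..length w. qint q (1 + (h + bar c) + psum w i))"
    by (simp only: prod.atLeast_Suc_atMost prod.atLeast_Suc_atMost_Suc_shift comp_def psum_Cons
        One_nat_def psum_zero le_add1 Suc_le_mono) (simp add: algebra_simps)
  then show ?case by (simp add: Cons.IH del: prod.cl_ivl_Suc)
qed simp

text \<open>A path that dips below height \<open>0\<close> passes through height \<open>-1\<close>, where the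
  factor \<open>[1 + (-1)] = 0\<close> appears.\<close>
lemma path_weight_below_zero:
  "h \<ge> 0 \<Longrightarrow> i \<le> length w \<Longrightarrow> h + psum w i < 0 \<Longrightarrow> path_weight q h w = 0"
proof (induction w arbitrary: h i)
  case (Cons c w)
  show ?case
  proof (cases "h + bar c = -1")
    case False
    then have "h + bar c \<ge> 0" using Cons.prems(1) by (cases c) auto
    moreover obtain i' where "i = Suc i'" using Cons.prems by (cases i) auto
    ultimately show ?thesis using Cons by (simp add: psum_Cons)
  qed (simp add: add.assoc)
qed (simp add: psum_def)

lemma even_length_iff_even_height: "even (length w) \<longleftrightarrow> even (height w)"
proof (induction w)
  case (Cons c w)
  then show ?case by (cases c) simp_all
qed simp

lemma Cn_eq_path_series:
  assumes "qint q 1 = 1"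
  shows "Cn q i w = (if length w = 2 * i then path_series q 0 w else 0)"
proof (cases "length w = 2 * i \<and> height w = 0 \<and> \<not> catalan w")
  case True
  then obtain j where "1 \<le> j" "j \<le> length w - 1" "psum w j < 0"
    by (auto simp: catalan_def psum_length not_le)
  then have "path_weight q 0 w = 0"
    by (intro path_weight_below_zero[of 0 j]) auto
  with True show ?thesis by (simp add: Cn_def path_series_def)
next
  case False
  then show ?thesis
    using assms by (auto simp: Cn_def path_series_def catalan_def psum_length path_weight_eq_prod)
qed

lemma path_series_eq_sum_Cn:
  assumes "qint q 1 = 1" and "length w \<le> N"
  shows "path_series q 0 w = (\<Sum>i\<le>N. Cn q i w)"
proof (cases "even (length w)")
  case True
  then obtain m where m: "length w = 2 * m" by auto
  have "(\<Sum>i\<le>N. Cn q i w) = (\<Sum>i\<le>N. if i = m then path_series q 0 w else 0)"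
    by (rule sum.cong) (auto simp: Cn_eq_path_series[OF assms(1)] m)
  also have "\<dots> = path_series q 0 w" using assms(2) m by (simp add: sum.delta)
  finally show ?thesis by simp
next
  case False
  then have "height w \<noteq> 0" using even_length_iff_even_height by fastforce
  then show ?thesis
    using False by (auto simp: Cn_eq_path_series[OF assms(1)] path_series_def intro!: sum.neutral)
qed

lemma gseries_eq_sum_Gt:
  "length w \<le> N \<Longrightarrow> gseries \<alpha> w = (\<Sum>j\<le>N. \<alpha> ^ j * Gt j w)
     \<and> wseries \<alpha> w = (\<Sum>j\<le>N. \<alpha> ^ j * Wint (int j) w)"
proof (induction w arbitrary: N)
  case Nil
  have "(\<Sum>j\<le>N. \<alpha> ^ j * Gt j []) = (\<Sum>j\<le>N. if j = 0 then 1 else 0)"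
    by (rule sum.cong) (auto simp: Gt_def basis_def)
  then show ?case by simp
next
  case (Cons c w)
  then obtain M where M: "N = Suc M" "length w \<le> M" by (cases N) auto
  have Gt_Cons: "Gt j (a # w) = lder a (Gint (int j)) w" for j a
    by (simp add: lder_def Gint_def)
  have Wint_Cons: "Wint j (a # w) = lder a (Wint j) w" for j a
    by (simp add: lder_def)
  show ?case
  proof (cases c)
    case X
    then show ?thesis using Cons.IH[of N] Cons.prems by (simp add: Gt_Cons Wint_Cons)
  next
    case Y
    have "(\<Sum>j\<le>N. \<alpha> ^ j * Wint (int j) (Y # w)) = (\<Sum>j\<le>Suc M. \<alpha> ^ j * Gint (int j - 1) w)"
      by (simp add: Wint_Cons M)
    also have "\<dots> = \<alpha> * (\<Sum>j\<le>M. \<alpha> ^ j * Gt j w)"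
      unfolding sum.atMost_Suc_shift by (simp add: sum_distrib_left Gint_def mult.assoc)
    finally show ?thesis using Cons.IH[OF M(2)] Y by (simp add: Gt_Cons)
  qed
qed

section \<open>The part of length \<open>2n\<close> of the identity\<close>

definition triples :: "nat \<Rightarrow> (nat \<times> nat \<times> nat) set" where
  "triples n = {(i, j, k). i + j + k = n}"

definition lower_triples :: "nat \<Rightarrow> (nat \<times> nat \<times> nat) set" where
  "lower_triples n = {(i, j, k). i + j + k = n \<and> i < n \<and> j < n \<and> k < n}"

definition triple_term :: "'a::field \<Rightarrow> nat \<times> nat \<times> nat \<Rightarrow> 'a vec" where
  "triple_term q = (\<lambda>(i, j, k) w. (- q) ^ j * (- inverse q) ^ k * qsh q (Cn q i) (qsh q (Gt j) (Gt k)) w)"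

lemma triples_subset: "triples n \<subseteq> {..n} \<times> {..n} \<times> {..n}"
  by (auto simp: triples_def)

lemma finite_lower_triples: "finite (lower_triples n)"
  by (rule finite_subset[of _ "{..n} \<times> {..n} \<times> {..n}"]) (auto simp: lower_triples_def)

lemma triples_eq_insert:
  "1 \<le> n \<Longrightarrow> triples n = insert (n, 0, 0) (insert (0, n, 0) (insert (0, 0, n) (lower_triples n)))"
  by (auto simp: triples_def lower_triples_def)

lemma homog_Cn: "homog (2 * i) (Cn q i)"
  by (simp add: homog_def Cn_def)

lemma homog_Gt: "homog (2 * j) (Gt j)"
proof -
  have "length (concat (replicate j [X, Y])) = 2 * j"
    by (induction j) simp_all
  then show ?thesis
    using homog_basis[of "concat (replicate j [X, Y])"] by (simp add: Gt_def)
qed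

lemma triple_term_vanishes:
  assumes "length w \<noteq> 2 * (i + j + k)"
  shows "triple_term q (i, j, k) w = 0"
proof -
  have "homog (2 * i + (2 * j + 2 * k)) (qsh q (Cn q i) (qsh q (Gt j) (Gt k)))"
    by (intro homog_qsh homog_Cn homog_Gt)
  with assms show ?thesis by (auto simp: triple_term_def homog_def)
qed

context
  fixes q :: "'a::field"
  assumes q_nonzero: "q \<noteq> 0" and q_square: "q * q \<noteq> 1"
begin

text \<open>The part of length \<open>2n\<close> of \<open>C(1) \<star> G(-q) \<star> G(-q\<^sup>-\<^sup>1) = 1\<close>, where \<open>C(t) = \<Sum> C\<^sub>n t\<^sup>n\<close>
  and \<open>G(t) = \<Sum> G\<^sub>k t\<^sup>k\<close>. The identity of series is truncated at the length of the word
  under consideration.\<close>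
lemma sum_triple_term_eq_zero:
  assumes "1 \<le> n"
  shows "(\<Sum>x\<in>triples n. triple_term q x w) = 0"
proof (cases "length w = 2 * n")
  case False
  then show ?thesis
    by (intro sum.neutral) (auto simp: triples_def triple_term_vanishes)
next
  case True
  define N where "N = length w"
  have C: "path_series q 0 u = (\<Sum>i\<le>N. Cn q i u)" if "length u \<le> length w" for u
    using path_series_eq_sum_Cn[OF qint_one[OF q_nonzero q_square]] that by (simp add: N_def)
  have G: "gseries \<alpha> u = (\<Sum>j\<le>N. \<alpha> ^ j * Gt j u)" if "length u \<le> length w" for \<alpha> u
    using gseries_eq_sum_Gt[of u N \<alpha>] that by (simp add: N_def)
  have G_product: "qsh q (gseries (- q)) (gseries (- inverse q)) u
      = qsh q (\<lambda>u. \<Sum>j\<le>N. (- q) ^ j * Gt j u) (\<lambda>u. \<Sum>k\<le>N. (- inverse q) ^ k * Gt k u) u"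
    if "length u \<le> length w" for u
    using that by (intro qsh_cong_short) (metis G order_trans)+
  have "0 = basis [] w"
    using True assms by (auto simp: basis_def)
  also have "\<dots> = qsh q (path_series q 0) (qsh q (gseries (- q)) (gseries (- inverse q))) w"
    using path_series_qsh_gseries[OF q_nonzero q_square] by simp
  also have "\<dots> = qsh q (\<lambda>u. \<Sum>i\<le>N. Cn q i u)
      (qsh q (\<lambda>u. \<Sum>j\<le>N. (- q) ^ j * Gt j u) (\<lambda>u. \<Sum>k\<le>N. (- inverse q) ^ k * Gt k u)) w"
    by (rule qsh_cong_short) (simp_all add: C G_product)
  also have "\<dots> = (\<Sum>i\<le>N. \<Sum>j\<le>N. \<Sum>k\<le>N. triple_term q (i, j, k) w)"
  proof -
    have "qsh q (\<lambda>u. \<Sum>j\<le>N. (- q) ^ j * Gt j u) (\<lambda>u. \<Sum>k\<le>N. (- inverse q) ^ k * Gt k u)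
        = (\<lambda>u. \<Sum>j\<le>N. \<Sum>k\<le>N. (- q) ^ j * (- inverse q) ^ k * qsh q (Gt j) (Gt k) u)"
      by (rule ext) (rule qsh_sum_sum)
    then show ?thesis
      by (simp add: qsh_sum_left qsh_sum_right qsh_scale_right triple_term_def)
  qed
  also have "\<dots> = (\<Sum>x\<in>{..N} \<times> {..N} \<times> {..N}. triple_term q x w)"
    by (simp add: sum.cartesian_product)
  also have "\<dots> = (\<Sum>x\<in>triples n. triple_term q x w)"
    using triples_subset[of n] True
    by (intro sum.mono_neutral_right) (auto simp: N_def triples_def intro!: triple_term_vanishes)
  finally show ?thesis ..
qed

lemma Cn_zero: "Cn q 0 = basis []"
  by (rule ext) (simp add: Cn_eq_path_series[OF qint_one[OF q_nonzero q_square]] path_series_def basis_def)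

lemma Cn_Gt_relation:
  assumes "1 \<le> n"
  shows "Cn q n w + ((- q) ^ n + (- inverse q) ^ n) * Gt n w
     + (\<Sum>x\<in>lower_triples n. triple_term q x w) = 0"
proof -
  have "(n, 0, 0) \<notin> insert (0, n, 0) (insert (0, 0, n) (lower_triples n))"
    "(0, n, 0) \<notin> insert (0, 0, n) (lower_triples n)" "(0, 0, n) \<notin> lower_triples n"
    using assms by (auto simp: lower_triples_def)
  then have "(\<Sum>x\<in>triples n. triple_term q x w) = triple_term q (n, 0, 0) w
      + (triple_term q (0, n, 0) w + (triple_term q (0, 0, n) w
      + (\<Sum>x\<in>lower_triples n. triple_term q x w)))"
    by (simp add: triples_eq_insert[OF assms] finite_lower_triples)
  with sum_triple_term_eq_zero[OF assms, of w] show ?thesis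
    by (simp add: triple_term_def Gt_def Cn_zero algebra_simps)
qed

end

section \<open>Homogeneous polynomials in a commuting family\<close>

definition hom_poly :: "'a::field \<Rightarrow> (nat \<Rightarrow> 'a vec) \<Rightarrow> nat \<Rightarrow> 'a vec \<Rightarrow> bool" where
  "hom_poly q F n f \<longleftrightarrow> (\<exists>c. hom_poly_with q F n c f)"

definition hom_poly_lead :: "'a::field \<Rightarrow> (nat \<Rightarrow> 'a vec) \<Rightarrow> nat \<Rightarrow> 'a vec \<Rightarrow> 'a \<Rightarrow> bool" where
  "hom_poly_lead q F n f k \<longleftrightarrow> (\<exists>c. hom_poly_with q F n c f \<and> c {#n#} = k)"

lemma hom_poly_leadD: "hom_poly_lead q F n f k \<Longrightarrow> hom_poly q F n f"
  by (auto simp: hom_poly_lead_def hom_poly_def)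

lemma size_le_sum_mset: "0 \<notin># p \<Longrightarrow> size p \<le> sum_mset (p :: nat multiset)"
proof (induction p)
  case (add x p)
  then show ?case by (cases x) auto
qed simp

lemma finite_partitions: "finite (partitions n)"
proof -
  have "partitions n \<subseteq> mset ` {xs. set xs \<subseteq> {0..n} \<and> length xs \<le> n}"
  proof
    fix p assume p: "p \<in> partitions n"
    then have "set_mset p \<subseteq> {0..n}" "size p \<le> n"
      using size_le_sum_mset[of p] by (auto simp: partitions_def dest!: multi_member_split)
    then show "p \<in> mset ` {xs. set xs \<subseteq> {0..n} \<and> length xs \<le> n}"
      by (intro image_eqI[of _ _ "sorted_list_of_multiset p"]) (auto simp flip: size_mset)
  qed
  then show ?thesis
    by (rule finite_subset) (intro finite_imageI finite_lists_length_le; simp)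
qed

locale commuting_family =
  fixes q :: "'a::field" and F :: "nat \<Rightarrow> 'a vec"
  assumes q_nonzero: "q \<noteq> 0"
    and commute: "\<And>i j. qsh q (F i) (F j) = qsh q (F j) (F i)"
    and fin_supp_F: "\<And>i. fin_supp (F i)"
begin

definition mprod :: "nat list \<Rightarrow> 'a vec" where
  "mprod xs = foldr (qsh q) (map F xs) (basis [])"

lemma mprod_simps [simp]: "mprod [] = basis []" "mprod (i # xs) = qsh q (F i) (mprod xs)"
  by (simp_all add: mprod_def)

lemma monomial_eq_mprod: "monomial q F p = mprod (sorted_list_of_multiset p)"
proof -
  have "foldr (qstar q) (map F xs) (basis []) = mprod xs \<and> fin_supp (mprod xs)" for xs
    by (induction xs) (auto simp: fin_supp_basis fin_supp_F qstar_eq_qsh fin_supp_qsh)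
  then show ?thesis by (simp add: monomial_def qstar_list_def)
qed

lemma mprod_append: "qsh q (mprod xs) (mprod ys) = mprod (xs @ ys)"
  by (induction xs) (simp_all add: qsh_assoc[OF q_nonzero])

lemma F_mprod_commute: "qsh q (F i) (mprod xs) = qsh q (mprod xs) (F i)"
proof (induction xs)
  case (Cons j xs)
  have "qsh q (F i) (mprod (j # xs)) = qsh q (F j) (qsh q (F i) (mprod xs))"
    by (simp add: qsh_assoc[OF q_nonzero, symmetric] commute)
  then show ?case
    by (simp add: Cons qsh_assoc[OF q_nonzero])
qed simp

lemma mprod_perm: "mset xs = mset ys \<Longrightarrow> mprod xs = mprod ys"
proof (induction xs arbitrary: ys)
  case (Cons i xs)
  then have "i \<in> set ys" by (metis list.set_intros(1) set_mset_mset)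
  then obtain ys1 ys2 where ys: "ys = ys1 @ i # ys2" by (meson split_list)
  then have "mset xs = mset (ys1 @ ys2)" using Cons.prems by simp
  have "mprod ys = qsh q (qsh q (mprod ys1) (F i)) (mprod ys2)"
    by (simp add: ys mprod_append[symmetric] qsh_assoc[OF q_nonzero])
  also have "\<dots> = qsh q (F i) (mprod (ys1 @ ys2))"
    by (simp only: F_mprod_commute[of i ys1, symmetric]) (simp add: qsh_assoc[OF q_nonzero] mprod_append)
  finally show ?case using Cons.IH[OF \<open>mset xs = mset (ys1 @ ys2)\<close>] by simp
qed simp

lemma qsh_monomial: "qsh q (monomial q F p) (monomial q F p') = monomial q F (p + p')"
  unfolding monomial_eq_mprod mprod_append by (rule mprod_perm) simp

lemma monomial_single: "monomial q F {#n#} = F n"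
  by (simp add: monomial_eq_mprod)

lemma hom_poly_lead_F: "1 \<le> n \<Longrightarrow> hom_poly_lead q F n (F n) 1"
proof -
  assume "1 \<le> n"
  then have "{#n#} \<in> partitions n" by (simp add: partitions_def)
  then have "F n = (\<lambda>w. \<Sum>p\<in>partitions n. (if p = {#n#} then 1 else 0) * monomial q F p w)"
    using finite_partitions[of n]
    by (simp add: monomial_single if_distrib[of "\<lambda>x. x * _"] sum.delta cong: if_cong)
  then show ?thesis
    unfolding hom_poly_lead_def hom_poly_with_def by (intro exI[of _ "\<lambda>p. if p = {#n#} then 1 else 0"]) simp
qed

lemma hom_poly_one: "hom_poly q F 0 (basis [])"
proof -
  have "partitions 0 = {{#}}"
    by (auto simp: partitions_def) (metis multiset_nonemptyE)
  then show ?thesis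
    unfolding hom_poly_def hom_poly_with_def by (intro exI[of _ "\<lambda>_. 1"]) (simp add: monomial_eq_mprod)
qed

lemma hom_poly_lead_add:
  "hom_poly_lead q F n f k \<Longrightarrow> hom_poly_lead q F n g l \<Longrightarrow> hom_poly_lead q F n (\<lambda>w. f w + g w) (k + l)"
  unfolding hom_poly_lead_def hom_poly_with_def
  by (elim exE conjE, rule_tac x="\<lambda>p. c p + ca p" in exI) (auto simp: distrib_right sum.distrib)

lemma hom_poly_lead_scale:
  "hom_poly_lead q F n f k \<Longrightarrow> hom_poly_lead q F n (\<lambda>w. a * f w) (a * k)"
  unfolding hom_poly_lead_def hom_poly_with_def
  by (elim exE conjE, rule_tac x="\<lambda>p. a * c p" in exI) (auto simp: sum_distrib_left mult.assoc)

lemma hom_poly_lead_sum: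
  assumes "finite I" "\<And>i. i \<in> I \<Longrightarrow> hom_poly_lead q F n (f i) (k i)"
  shows "hom_poly_lead q F n (\<lambda>w. \<Sum>i\<in>I. f i w) (\<Sum>i\<in>I. k i)"
  using assms
proof (induction I rule: finite_induct)
  case empty
  show ?case
    unfolding hom_poly_lead_def hom_poly_with_def by (intro exI[of _ "\<lambda>_. 0"]) simp
qed (simp add: hom_poly_lead_add)

text \<open>Multiplying out: the coefficient of \<open>F (a + b)\<close> in a product vanishes when both
  factors have positive degree, since \<open>{#a + b#}\<close> is not a sum of two nonempty partitions.\<close>
lemma hom_poly_qsh_coeffs:
  assumes "hom_poly q F a f" "hom_poly q F b g"
  obtains e where "hom_poly_with q F (a + b) e (qsh q f g)" "1 \<le> a \<Longrightarrow> 1 \<le> b \<Longrightarrow> e {#a + b#} = 0"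
proof -
  obtain c d where c: "f = (\<lambda>w. \<Sum>p\<in>partitions a. c p * monomial q F p w)"
    and d: "g = (\<lambda>w. \<Sum>p\<in>partitions b. d p * monomial q F p w)"
    using assms by (auto simp: hom_poly_def hom_poly_with_def)
  let ?A = "partitions a" and ?B = "partitions b" and ?R = "partitions (a + b)"
  define e where "e r = (\<Sum>x\<in>{x \<in> ?A \<times> ?B. fst x + snd x = r}. c (fst x) * d (snd x))" for r
  have "(\<lambda>x. fst x + snd x) ` (?A \<times> ?B) \<subseteq> ?R"
    by (auto simp: partitions_def)
  then have "qsh q f g w = (\<Sum>r\<in>?R. e r * monomial q F r w)" for w
    unfolding c d qsh_sum_sum qsh_monomial
    by (simp add: sum.cartesian_product split_beta e_def sum_distrib_right
        sum.group[OF finite_cartesian_product[OF finite_partitions finite_partitions] finite_partitions,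
          symmetric])
  moreover have "e {#a + b#} = 0" if "1 \<le> a" "1 \<le> b"
  proof -
    have "p + p' \<noteq> {#a + b#}" if "p \<in> ?A" "p' \<in> ?B" for p p'
      using that \<open>1 \<le> a\<close> \<open>1 \<le> b\<close> by (auto simp: partitions_def union_is_single)
    then show ?thesis
      by (auto simp: e_def intro!: sum.neutral)
  qed
  ultimately show ?thesis
    using that[of e] by (simp add: hom_poly_with_def fun_eq_iff)
qed

lemma hom_poly_qsh_closed:
  "hom_poly q F a f \<Longrightarrow> hom_poly q F b g \<Longrightarrow> hom_poly q F (a + b) (qsh q f g)"
  by (metis hom_poly_def hom_poly_qsh_coeffs)

lemma hom_poly_lead_qsh:
  "hom_poly q F a f \<Longrightarrow> hom_poly q F b g \<Longrightarrow> 1 \<le> a \<Longrightarrow> 1 \<le> b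
    \<Longrightarrow> hom_poly_lead q F (a + b) (qsh q f g) 0"
  by (metis hom_poly_lead_def hom_poly_qsh_coeffs)

lemma hom_poly_commute:
  assumes "hom_poly q F a f" "hom_poly q F b g"
  shows "qsh q f g = qsh q g f"
proof
  fix w
  obtain c d where c: "f = (\<lambda>w. \<Sum>p\<in>partitions a. c p * monomial q F p w)"
    and d: "g = (\<lambda>w. \<Sum>p\<in>partitions b. d p * monomial q F p w)"
    using assms by (auto simp: hom_poly_def hom_poly_with_def)
  show "qsh q f g w = qsh q g f w"
    unfolding c d qsh_sum_sum
    by (subst sum.swap) (simp add: qsh_monomial add.commute mult.commute mult.left_commute)
qed

end

section \<open>The \<open>C\<^sub>n\<close> in terms of the \<open>G\<^sub>k\<close> and conversely\<close>

lemma neg_power_sum: "(- x) ^ n + (- inverse x) ^ n = (-1) ^ n * (x ^ n + inverse x ^ n)"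
  for x :: "'a::field"
  by (simp add: power_minus[of x] power_minus[of "inverse x"] distrib_left)

lemma power_add_inverse_power_nonzero:
  fixes q :: "'a::field"
  assumes "q \<noteq> 0" and no_root: "\<And>m. 1 \<le> m \<Longrightarrow> q ^ m \<noteq> 1" and "1 \<le> m"
  shows "q ^ m + inverse q ^ m \<noteq> 0"
proof
  assume "q ^ m + inverse q ^ m = 0"
  then have "q ^ m * (q ^ m + inverse q ^ m) = 0" by simp
  then have "q ^ m * q ^ m = -1"
    using \<open>q \<noteq> 0\<close> by (simp add: distrib_left power_mult_distrib[symmetric] eq_neg_iff_add_eq_0)
  then have "q ^ (4 * m) = 1"
    by (simp add: power_mult[of q m 4, unfolded mult.commute[of m]] power4_eq_xxxx mult.assoc[symmetric])
  with no_root[of "4 * m"] \<open>1 \<le> m\<close> show False by simp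
qed

context
  fixes q :: "'a::field"
  assumes q_nonzero: "q \<noteq> 0" and q_square: "q * q \<noteq> 1"
begin

lemma commuting_family_Gt: "commuting_family q Gt"
  using q_nonzero Gt_commute[OF q_nonzero] fin_supp_homog[OF homog_Gt]
  by unfold_locales

text \<open>Each triple in \<open>lower_triples n\<close> has at least two positive entries, so the
  coefficient of \<open>F n\<close> vanishes in every term.\<close>
lemma hom_poly_lower_terms:
  assumes "commuting_family q F"
    and C: "\<And>m. m < n \<Longrightarrow> hom_poly q F m (Cn q m)"
    and G: "\<And>m. m < n \<Longrightarrow> hom_poly q F m (Gt m)"
  shows "hom_poly_lead q F n (\<lambda>w. \<Sum>x\<in>lower_triples n. triple_term q x w) 0"
proof -
  interpret commuting_family q F by fact
  have "hom_poly_lead q F n (triple_term q x) 0" if "x \<in> lower_triples n" for x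
  proof -
    obtain i j k where x: "x = (i, j, k)" "i + j + k = n" "i < n" "j < n" "k < n"
      using \<open>x \<in> lower_triples n\<close> by (auto simp: lower_triples_def)
    have "hom_poly_lead q F n (qsh q (Cn q i) (qsh q (Gt j) (Gt k))) 0"
    proof (cases "i = 0")
      case True
      then have "1 \<le> j" "1 \<le> k" using x by auto
      with True x show ?thesis
        using hom_poly_lead_qsh[OF G[of j] G[of k]] by (simp add: Cn_zero[OF q_nonzero q_square])
    next
      case False
      then have "1 \<le> i" "1 \<le> j + k" using x by auto
      then show ?thesis
        using hom_poly_lead_qsh[OF C[of i] hom_poly_qsh_closed[OF G[of j] G[of k]]] x
        by (simp add: add.assoc)
    qed
    from hom_poly_lead_scale[OF this, of "(- q) ^ j * (- inverse q) ^ k"]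
    show ?thesis by (simp add: x triple_term_def)
  qed
  from hom_poly_lead_sum[OF finite_lower_triples this] show ?thesis by simp
qed

lemma Cn_expansion:
  "1 \<le> n \<Longrightarrow> hom_poly_lead q Gt n (Cn q n) ((-1) ^ (n + 1) * (q ^ n + inverse q ^ n))"
proof (induction n rule: less_induct)
  case (less n)
  interpret commuting_family q Gt by (rule commuting_family_Gt)
  define s where "s = (- q) ^ n + (- inverse q) ^ n"
  define R where "R = (\<lambda>w. \<Sum>x\<in>lower_triples n. triple_term q x w)"
  have C: "hom_poly q Gt m (Cn q m)" if "m < n" for m
  proof (cases "m = 0")
    case True
    then show ?thesis using hom_poly_one by (simp add: Cn_zero[OF q_nonzero q_square])
  qed (use hom_poly_leadD[OF less.IH[OF that]] in simp)
  have G: "hom_poly q Gt m (Gt m)" for m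
  proof (cases "m = 0")
    case True
    then show ?thesis using hom_poly_one by (simp add: Gt_def)
  qed (use hom_poly_leadD[OF hom_poly_lead_F] in simp)
  have "hom_poly_lead q Gt n (\<lambda>w. - s * Gt n w + (-1) * R w) (- s * 1 + (-1) * 0)"
    unfolding R_def
    by (intro hom_poly_lead_add hom_poly_lead_scale hom_poly_lead_F less.prems
        hom_poly_lower_terms[OF commuting_family_Gt C G])
  moreover have "Cn q n = (\<lambda>w. - s * Gt n w + (-1) * R w)"
  proof
    fix w
    show "Cn q n w = - s * Gt n w + (-1) * R w"
      using Cn_Gt_relation[OF q_nonzero q_square less.prems, of w]
      by (simp add: s_def R_def algebra_simps eq_neg_iff_add_eq_0)
  qed
  ultimately show ?case by (simp add: s_def neg_power_sum)
qed

lemma commuting_family_Cn: "commuting_family q (Cn q)"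
proof
  interpret commuting_family q Gt by (rule commuting_family_Gt)
  fix i j
  show "qsh q (Cn q i) (Cn q j) = qsh q (Cn q j) (Cn q i)"
  proof (cases "i = 0 \<or> j = 0")
    case False
    then show ?thesis
      using hom_poly_commute[OF hom_poly_leadD[OF Cn_expansion] hom_poly_leadD[OF Cn_expansion]]
      by simp
  qed (auto simp: Cn_zero[OF q_nonzero q_square])
qed (use q_nonzero fin_supp_homog[OF homog_Cn] in auto)

lemma Gt_expansion:
  assumes nonzero: "\<And>m. 1 \<le> m \<Longrightarrow> q ^ m + inverse q ^ m \<noteq> 0"
  shows "1 \<le> n \<Longrightarrow> hom_poly_lead q (Cn q) n (Gt n) ((-1) ^ (n + 1) * inverse (q ^ n + inverse q ^ n))"
proof (induction n rule: less_induct)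
  case (less n)
  interpret commuting_family q "Cn q" by (rule commuting_family_Cn)
  define s where "s = (- q) ^ n + (- inverse q) ^ n"
  define R where "R = (\<lambda>w. \<Sum>x\<in>lower_triples n. triple_term q x w)"
  have "s \<noteq> 0"
    using nonzero[OF less.prems] by (simp add: s_def neg_power_sum)
  have C: "hom_poly q (Cn q) m (Cn q m)" for m
  proof (cases "m = 0")
    case True
    then show ?thesis using hom_poly_one by (simp add: Cn_zero[OF q_nonzero q_square])
  qed (use hom_poly_leadD[OF hom_poly_lead_F] in simp)
  have G: "hom_poly q (Cn q) m (Gt m)" if "m < n" for m
  proof (cases "m = 0")
    case True
    then show ?thesis using hom_poly_one by (simp add: Gt_def)
  qed (use hom_poly_leadD[OF less.IH[OF that]] in simp)
  have "hom_poly_lead q (Cn q) n (\<lambda>w. - inverse s * Cn q n w + - inverse s * R w)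
      (- inverse s * 1 + - inverse s * 0)"
    unfolding R_def
    by (intro hom_poly_lead_add hom_poly_lead_scale hom_poly_lead_F less.prems
        hom_poly_lower_terms[OF commuting_family_Cn C G])
  moreover have "Gt n = (\<lambda>w. - inverse s * Cn q n w + - inverse s * R w)"
  proof
    fix w
    have "s * Gt n w = - (Cn q n w + R w)"
      using Cn_Gt_relation[OF q_nonzero q_square less.prems, of w]
      by (simp add: s_def R_def algebra_simps eq_neg_iff_add_eq_0)
    then show "Gt n w = - inverse s * Cn q n w + - inverse s * R w"
      using \<open>s \<noteq> 0\<close> by (simp add: field_simps)
  qed
  moreover have "- inverse s = (-1) ^ (n + 1) * inverse (q ^ n + inverse q ^ n)"
    by (simp add: s_def neg_power_sum power_inverse[symmetric])
  ultimately show ?case by simp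
qed

end

theorem corollary11p11:
  fixes q :: "'a::field" and n :: nat
  assumes "q \<noteq> 0" and "\<forall>m::nat. m \<ge> 1 \<longrightarrow> q ^ m \<noteq> 1"
    and "n \<ge> 1"
  shows "(\<exists>c. hom_poly_with q Gt n c (Cn q n)
            \<and> c {#n#} = (-1) ^ (n + 1) * (q ^ n + inverse q ^ n))
       \<and> (\<exists>d. hom_poly_with q (Cn q) n d (Gt n)
            \<and> d {#n#} = (-1) ^ (n + 1) * inverse (q ^ n + inverse q ^ n))"
proof -
  have "q * q \<noteq> 1"
    using assms(2) by (metis one_le_numeral power2_eq_square)
  moreover have "q ^ m + inverse q ^ m \<noteq> 0" if "1 \<le> m" for m
    using power_add_inverse_power_nonzero assms(1,2) that by blast
  ultimately show ?thesis
    using Cn_expansion Gt_expansion assms(1,3) unfolding hom_poly_lead_def by blast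
qed

end
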